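(* Let $(S,E,f)$ be a reduced and closed observation table for $U$ and $D$ as defined below. If $|S|=\mathit{Ind}(\sim_{U,D})$, then $\mathcal{T}_{S,f}$ is isomorphic to $\mathcal{T}_{U,D}$.
   Context: $\Sigma$ is a finite alphabet, $U\subseteq\Sigma^\omega$ an $\omega$-language recognizable by a weak deterministic Büchi automaton, and $D\subseteq\Sigma^\omega$ a regular set with trivial right-congruence (i.e. for all $w\in\Sigma^*,\alpha\in\Sigma^\omega$: $\alpha\in D\iff w\alpha\in D$). $w\sim_{U,D}w'$ iff for all $\alpha\in\Sigma^\omega\setminus D$: $w\alpha\in U\iff w'\alpha\in U$; it is a right-congruence, $\mathit{Ind}(\sim_{U,D})$ is its number of classes, and $\mathcal{T}_{U,D}$ is its induced transition system (states the classes $[u]$, initial $[\epsilon]$, transitions $[u]\xrightarrow{\sigma}[u\sigma]$). An observation table $(S,E,f)$ consists of a prefix-closed finite $S\subseteq\Sigma^*$, a suffix-closed finite set $E$ of ultimately periodic words with $E\cap D=\emptyset$, and $f:(S\cup S\Sigma)\times E\to\{\text{yes},\text{no}\}$ with $f(s,\alpha)=\text{yes}$ iff $s\alpha\in U$. For $s\in S\cup S\Sigma$ let $f_s:E\to\{\text{yes},\text{no}\}$, $f_s(\alpha)=f(s,\alpha)$. The table is reduced if $f_s\neq f_t$ for distinct $s,t\in S$, and closed if for every $s\in S\Sigma$ there is $t\in S$ with $f_s=f_t$. For a reduced closed table, $\mathcal{T}_{S,f}=(\Sigma,S,\delta_f,\epsilon)$ with $\delta_f(s,\sigma)$ the unique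 $t\in S$ with $f_{s\sigma}=f_t$. *)

theory Defs
  imports Main "HOL-Library.Omega_Words_Fun"
begin

definition dba :: "nat set \<Rightarrow> nat \<Rightarrow> (nat \<Rightarrow> 'a \<Rightarrow> nat) \<Rightarrow> nat set \<Rightarrow> bool" where
  "dba Q q0 \<delta> F \<longleftrightarrow> finite Q \<and> q0 \<in> Q \<and> F \<subseteq> Q \<and> (\<forall>q\<in>Q. \<forall>a. \<delta> q a \<in> Q)"

definition dba_run :: "(nat \<Rightarrow> 'a \<Rightarrow> nat) \<Rightarrow> nat \<Rightarrow> 'a word \<Rightarrow> nat \<Rightarrow> nat" where
  "dba_run \<delta> q0 \<alpha> n = foldl \<delta> q0 (prefix n \<alpha>)"

definition dba_lang :: "(nat \<Rightarrow> 'a \<Rightarrow> nat) \<Rightarrow> nat \<Rightarrow> nat set \<Rightarrow> 'a word set" where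
  "dba_lang \<delta> q0 F = {\<alpha>. \<exists>\<^sub>\<infinity> n. dba_run \<delta> q0 \<alpha> n \<in> F}"

text \<open>Weak: every strongly connected component is either entirely accepting or entirely
  rejecting, i.e. mutually reachable states agree on membership in F.\<close>
definition weak_dba :: "nat set \<Rightarrow> nat \<Rightarrow> (nat \<Rightarrow> 'a \<Rightarrow> nat) \<Rightarrow> nat set \<Rightarrow> bool" where
  "weak_dba Q q0 \<delta> F \<longleftrightarrow> dba Q q0 \<delta> F \<and>
     (\<forall>p\<in>Q. \<forall>q\<in>Q. (\<exists>w. foldl \<delta> p w = q) \<and> (\<exists>w. foldl \<delta> q w = p) \<longrightarrow> (p \<in> F \<longleftrightarrow> q \<in> F))"

definition WDBA_recognizable :: "'a word set \<Rightarrow> bool" where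
  "WDBA_recognizable U \<longleftrightarrow> (\<exists>Q q0 \<delta> F. weak_dba Q q0 \<delta> F \<and> U = dba_lang \<delta> q0 F)"

definition nba :: "nat set \<Rightarrow> nat set \<Rightarrow> (nat \<Rightarrow> 'a \<Rightarrow> nat set) \<Rightarrow> nat set \<Rightarrow> bool" where
  "nba Q I \<Delta> F \<longleftrightarrow> finite Q \<and> I \<subseteq> Q \<and> F \<subseteq> Q \<and> (\<forall>q\<in>Q. \<forall>a. \<Delta> q a \<subseteq> Q)"

definition nba_lang :: "nat set \<Rightarrow> (nat \<Rightarrow> 'a \<Rightarrow> nat set) \<Rightarrow> nat set \<Rightarrow> 'a word set" where
  "nba_lang I \<Delta> F = {\<alpha>. \<exists>r. r 0 \<in> I \<and> (\<forall>n. r (Suc n) \<in> \<Delta> (r n) (\<alpha> n)) \<and> (\<exists>\<^sub>\<infinity> n. r n \<in> F)}"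

definition omega_regular :: "'a word set \<Rightarrow> bool" where
  "omega_regular D \<longleftrightarrow> (\<exists>Q I \<Delta> F. nba Q I \<Delta> F \<and> D = nba_lang I \<Delta> F)"

definition trivial_right_congruence :: "'a word set \<Rightarrow> bool" where
  "trivial_right_congruence D \<longleftrightarrow> (\<forall>w \<alpha>. \<alpha> \<in> D \<longleftrightarrow> w \<frown> \<alpha> \<in> D)"

definition ultimately_periodic :: "'a word \<Rightarrow> bool" where
  "ultimately_periodic \<alpha> \<longleftrightarrow> (\<exists>u v. v \<noteq> [] \<and> \<alpha> = u \<frown> v\<^sup>\<omega>)"

definition simUD :: "'a word set \<Rightarrow> 'a word set \<Rightarrow> ('a list \<times> 'a list) set" where
  "simUD U D = {(w, w'). \<forall>\<alpha>. \<alpha> \<notin> D \<longrightarrow> (w \<frown> \<alpha> \<in> U \<longleftrightarrow> w' \<frown> \<alpha> \<in> U)}"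

definition Ind :: "'a word set \<Rightarrow> 'a word set \<Rightarrow> nat" where
  "Ind U D = card (UNIV // simUD U D)"

text \<open>T_{U,D}: states are the classes, initial [\<epsilon>], transitions [u] -\<sigma>-> [u\<sigma>].\<close>
definition TUD_states :: "'a word set \<Rightarrow> 'a word set \<Rightarrow> 'a list set set" where
  "TUD_states U D = UNIV // simUD U D"

definition TUD_init :: "'a word set \<Rightarrow> 'a word set \<Rightarrow> 'a list set" where
  "TUD_init U D = simUD U D `` {[]}"

definition TUD_delta :: "'a word set \<Rightarrow> 'a word set \<Rightarrow> 'a list set \<Rightarrow> 'a \<Rightarrow> 'a list set" where
  "TUD_delta U D C \<sigma> = simUD U D `` {(SOME u. u \<in> C) @ [\<sigma>]}"

definition prefix_closed :: "'a list set \<Rightarrow> bool" where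
  "prefix_closed S \<longleftrightarrow> (\<forall>s\<in>S. \<forall>n. take n s \<in> S)"

definition suffix_closed :: "'a word set \<Rightarrow> bool" where
  "suffix_closed E \<longleftrightarrow> (\<forall>\<alpha>\<in>E. \<forall>n. suffix n \<alpha> \<in> E)"

text \<open>f is only meaningful on (S \<union> S\<Sigma>) \<times> E; True = yes, False = no.\<close>
definition obs_table :: "'a word set \<Rightarrow> 'a word set \<Rightarrow> 'a list set \<Rightarrow> 'a word set
    \<Rightarrow> ('a list \<Rightarrow> 'a word \<Rightarrow> bool) \<Rightarrow> bool" where
  "obs_table U D S E f \<longleftrightarrow>
     finite S \<and> [] \<in> S \<and> prefix_closed S \<and>
     finite E \<and> suffix_closed E \<and> (\<forall>\<alpha>\<in>E. ultimately_periodic \<alpha>) \<and> E \<inter> D = {} \<and>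
     (\<forall>s \<in> S \<union> {t @ [\<sigma>] | t \<sigma>. t \<in> S}. \<forall>\<alpha>\<in>E. f s \<alpha> \<longleftrightarrow> s \<frown> \<alpha> \<in> U)"

definition same_row :: "'a word set \<Rightarrow> ('a list \<Rightarrow> 'a word \<Rightarrow> bool) \<Rightarrow> 'a list \<Rightarrow> 'a list \<Rightarrow> bool" where
  "same_row E f s t \<longleftrightarrow> (\<forall>\<alpha>\<in>E. f s \<alpha> = f t \<alpha>)"

definition reduced :: "'a list set \<Rightarrow> 'a word set \<Rightarrow> ('a list \<Rightarrow> 'a word \<Rightarrow> bool) \<Rightarrow> bool" where
  "reduced S E f \<longleftrightarrow> (\<forall>s\<in>S. \<forall>t\<in>S. s \<noteq> t \<longrightarrow> \<not> same_row E f s t)"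

definition closed :: "'a list set \<Rightarrow> 'a word set \<Rightarrow> ('a list \<Rightarrow> 'a word \<Rightarrow> bool) \<Rightarrow> bool" where
  "closed S E f \<longleftrightarrow> (\<forall>s\<in>S. \<forall>\<sigma>. \<exists>t\<in>S. same_row E f (s @ [\<sigma>]) t)"

text \<open>Transition function of T_{S,f} (states S, initial \<epsilon> = []).\<close>
definition delta_f :: "'a list set \<Rightarrow> 'a word set \<Rightarrow> ('a list \<Rightarrow> 'a word \<Rightarrow> bool) \<Rightarrow> 'a list \<Rightarrow> 'a \<Rightarrow> 'a list" where
  "delta_f S E f s \<sigma> = (THE t. t \<in> S \<and> same_row E f (s @ [\<sigma>]) t)"

definition ts_iso :: "'q1 set \<Rightarrow> ('q1 \<Rightarrow> 'a \<Rightarrow> 'q1) \<Rightarrow> 'q1 \<Rightarrow> 'q2 set \<Rightarrow> ('q2 \<Rightarrow> 'a \<Rightarrow> 'q2) \<Rightarrow> 'q2 \<Rightarrow> bool" where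
  "ts_iso Q1 d1 i1 Q2 d2 i2 \<longleftrightarrow>
     (\<exists>h. bij_betw h Q1 Q2 \<and> h i1 = i2 \<and> (\<forall>q\<in>Q1. \<forall>\<sigma>. h (d1 q \<sigma>) = d2 (h q) \<sigma>))"

end

theory Submission
  imports Defs
begin

text \<open>Mapping each access word s \<in> S to its class [s] is injective, because two words in the
  same class agree on every suffix outside D and hence on every column of the table, and the
  table is reduced. Counting classes makes it a bijection onto the states of T_{U,D}. So the
  successor class [s\<sigma>] is the class of a unique row t \<in> S, which then has the same row as s\<sigma>;
  hence it is the successor of s in T_{S,f}.\<close>

lemma equiv_simUD: "equiv UNIV (simUD U D)"
  unfolding equiv_def refl_on_def sym_def trans_def simUD_def by auto

lemma simUD_class_eq_iff: "simUD U D `` {u} = simUD U D `` {v} \<longleftrightarrow> (u, v) \<in> simUD U D"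
  using eq_equiv_class_iff[OF equiv_simUD] by blast

lemma simUD_append:
  assumes "trivial_right_congruence D" "(u, v) \<in> simUD U D"
  shows "(u @ w, v @ w) \<in> simUD U D"
  unfolding simUD_def
proof (clarify)
  fix \<alpha> :: "'a word" assume "\<alpha> \<notin> D"
  then have "w \<frown> \<alpha> \<notin> D"
    using assms(1) unfolding trivial_right_congruence_def by blast
  then show "(u @ w) \<frown> \<alpha> \<in> U \<longleftrightarrow> (v @ w) \<frown> \<alpha> \<in> U"
    using assms(2) unfolding simUD_def by (simp flip: conc_conc)
qed

lemma TUD_delta_class:
  assumes "trivial_right_congruence D"
  shows "TUD_delta U D (simUD U D `` {u}) \<sigma> = simUD U D `` {u @ [\<sigma>]}"
proof -
  let ?R = "simUD U D"
  define v where "v = (SOME v. v \<in> ?R `` {u})"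
  have "u \<in> ?R `` {u}" unfolding simUD_def by simp
  then have "(u, v) \<in> ?R" unfolding v_def by (metis Image_singleton_iff someI)
  then have "(v, u) \<in> ?R" unfolding simUD_def by auto
  then have "(v @ [\<sigma>], u @ [\<sigma>]) \<in> ?R" by (rule simUD_append[OF assms])
  then show ?thesis
    unfolding TUD_delta_def v_def[symmetric] by (simp add: simUD_class_eq_iff)
qed

lemma same_row_if_simUD:
  assumes "obs_table U D S E f"
    and "s \<in> S \<union> {t @ [\<sigma>] | t \<sigma>. t \<in> S}" "t \<in> S" "(s, t) \<in> simUD U D"
  shows "same_row E f s t"
  unfolding same_row_def
proof
  fix \<alpha> assume "\<alpha> \<in> E"
  moreover from this have "\<alpha> \<notin> D" using assms(1) unfolding obs_table_def by blast
  ultimately show "f s \<alpha> = f t \<alpha>"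
    using assms unfolding obs_table_def simUD_def by auto
qed

lemma inj_on_simUD_class:
  assumes "obs_table U D S E f" "reduced S E f"
  shows "inj_on (\<lambda>s. simUD U D `` {s}) S"
proof (rule inj_onI)
  fix s t assume st: "s \<in> S" "t \<in> S" "simUD U D `` {s} = simUD U D `` {t}"
  then have "(s, t) \<in> simUD U D" by (simp add: simUD_class_eq_iff)
  with assms(1) st have "same_row E f s t" by (blast intro: same_row_if_simUD)
  with assms(2) st show "s = t" unfolding reduced_def by blast
qed

lemma delta_f_eq_if_simUD:
  assumes "obs_table U D S E f" "reduced S E f"
    and "s \<in> S" "t \<in> S" "(s @ [\<sigma>], t) \<in> simUD U D"
  shows "delta_f S E f s \<sigma> = t"
  unfolding delta_f_def
proof (rule the_equality)
  have row: "same_row E f (s @ [\<sigma>]) t"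
    using assms by (blast intro: same_row_if_simUD)
  then show "t \<in> S \<and> same_row E f (s @ [\<sigma>]) t" using assms(4) by blast
  fix t' assume "t' \<in> S \<and> same_row E f (s @ [\<sigma>]) t'"
  with row have "t' \<in> S" "same_row E f t' t" unfolding same_row_def by auto
  with assms(2,4) show "t' = t" unfolding reduced_def by blast
qed

theorem lemma5:
  fixes U D :: "('a::finite) word set"
    and S :: "'a list set" and E :: "'a word set" and f :: "'a list \<Rightarrow> 'a word \<Rightarrow> bool"
  assumes "WDBA_recognizable U"
    and "omega_regular D"
    and "trivial_right_congruence D"
    and "obs_table U D S E f"
    and "reduced S E f"
    and "closed S E f"
    and "card S = Ind U D"
  shows "ts_iso S (delta_f S E f) [] (TUD_states U D) (TUD_delta U D) (TUD_init U D)"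
proof -
  define h where "h s = simUD U D `` {s}" for s
  have inj: "inj_on h S"
    using inj_on_simUD_class[OF assms(4,5)] unfolding h_def .
  have "finite S" "S \<noteq> {}" using assms(4) unfolding obs_table_def by auto
  then have "finite (TUD_states U D)"
    using assms(7) unfolding Ind_def TUD_states_def by (metis card_0_eq card.infinite)
  moreover have "h ` S \<subseteq> TUD_states U D"
    unfolding h_def TUD_states_def quotient_def by blast
  moreover have "card (h ` S) = card (TUD_states U D)"
    using card_image[OF inj] assms(7) unfolding Ind_def TUD_states_def by simp
  ultimately have img: "h ` S = TUD_states U D" by (simp add: card_subset_eq)
  have "h (delta_f S E f s \<sigma>) = TUD_delta U D (h s) \<sigma>" if "s \<in> S" for s \<sigma>
  proof -
    have "h (s @ [\<sigma>]) \<in> h ` S"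
      unfolding img TUD_states_def h_def quotient_def by blast
    then obtain t where t: "t \<in> S" "h (s @ [\<sigma>]) = h t" by auto
    then have "delta_f S E f s \<sigma> = t"
      using delta_f_eq_if_simUD[OF assms(4,5) that] unfolding h_def
      by (simp add: simUD_class_eq_iff)
    with t show ?thesis unfolding h_def by (simp add: TUD_delta_class[OF assms(3)])
  qed
  moreover have "h [] = TUD_init U D" unfolding h_def TUD_init_def ..
  ultimately show ?thesis
    unfolding ts_iso_def bij_betw_def using inj img by blast
qed

end
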